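(* Let $\mathbf b_i\in\mathcal B_k$ be an interior point of $P(A)$. Let $\beta_1,\dots,\beta_{R_k}$ be the elements of $\{1/\ell_0,2/\ell_0,\dots,\ell_0/\ell_0\}$ not of the form $1-s_0^{(j)}/\ell_0$ with $\mathbf b_j\in\mathcal B_k$ a boundary point of $P(A)$ (one may take $\beta_1=1$), and let $\alpha_1,\dots,\alpha_{R_k}$ be the elements remaining on the list $\frac{v^{(i)}_r+\sigma}{\ell_r}$ ($r=1,\dots,m$, $\sigma=0,\dots,\ell_r-1$) after one copy of each element $1-s_0^{(j)}/\ell_0$ with $\mathbf b_j\in\mathcal B_k$ a boundary point of $P(A)$ has been removed. Then the $R_k$ series $F^{(\mathbf b_j)}_{\mathbf b_i}(\lambda)$ with $\mathbf b_j\in\mathcal B_k$ an interior point of $P(A)$ are obtained from a full set of solutions at $x=0$ of the hypergeometric operator \[(\delta_x+\beta_1-1)\cdots(\delta_x+\beta_{R_k}-1)-x(\delta_x+\alpha_1)\cdots(\delta_x+\alpha_{R_k}),\qquad\delta_x=x\tfrac{d}{dx},\] by replacing $x$ by $\lambda^{\ell_0}$; that is, $F^{(\mathbf b_j)}_{\mathbf b_i}(\lambda)=H_j(\lambda^{\ell_0})$ where the $H_j(x)$ (formal series in $x^{s_0^{(j)}/\ell_0}\mathbb C[[x]]$) form a full set of solutions of this operator at $x=0$.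
   Context: Let $A=\{\mathbf a_1,\dots,\mathbf a_m\}\subseteq\mathbb Z^n$ be linearly independent over $\mathbb R$, $\mathbf a_0\in\mathbb Z^n$, and $\ell_0,\dots,\ell_m$ positive integers with gcd $1$, $\ell_0\mathbf a_0=\sum_{j=1}^m\ell_j\mathbf a_j$, $\ell_0=\sum_{j=1}^m\ell_j$. Let $\mathbb ZA$, $\mathbb ZA_+$ be the groups generated by $A$ and $A\cup\{\mathbf a_0\}$. Let $V$ be the real span of $A$, $V_{\mathbb Z}=V\cap\mathbb Z^n$, $P(A)=\{\sum_jc_j\mathbf a_j:0\le c_j<1\}$, $\mathcal B=V_{\mathbb Z}\cap P(A)$. Each $\mathbf b\in\mathcal B$ is written uniquely $\mathbf b=\sum_rv_r\mathbf a_r$ with $v_r\in[0,1)$; $\mathbf b$ is an interior point of $P(A)$ if all $v_r>0$ and a boundary point otherwise. Fix a coset $\mathcal C_k$ of $\mathbb ZA_+$ in $V_{\mathbb Z}$, put $\mathcal B_k=\mathcal B\cap\mathcal C_k$ (it has $\ell_0$ elements), and let $R_k$ be the number of interior points of $P(A)$ in $\mathcal B_k$. Fix $\mathbf b_i\in\mathcal B_k$. For $\mathbf b_j\in\mathcal B_k$ write $\mathbf b_j=\sum_rv^{(j)}_r\mathbf a_r$, let $s_0^{(j)}\in\{0,\dots,\ell_0-1\}$ be the unique element with $\mathbf b_i+s_0^{(j)}\mathbf a_0\equiv\mathbf b_j\pmod{\mathbb ZA}$, and let $s^{(j)}_r\in\mathbb Z$ ($r=1,\dots,m$) be determined by $\mathbf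 b_i+s_0^{(j)}\mathbf a_0=\mathbf b_j-\sum_rs^{(j)}_r\mathbf a_r$. Define \[F^{(\mathbf b_j)}_{\mathbf b_i}(\lambda)=\lambda^{s_0^{(j)}}\sum_{s=0}^\infty\frac{\prod_{r=1}^m\prod_{\sigma=0}^{\ell_r-1}\big(\frac{v^{(j)}_r-s^{(j)}_r+\sigma}{\ell_r}\big)_s}{\prod_{t=1}^{\ell_0}\big(\frac{s^{(j)}_0+t}{\ell_0}\big)_s}\lambda^{s\ell_0},\] with $(a)_s=a(a+1)\cdots(a+s-1)$. *)

theory Defs
  imports "HOL-Analysis.Analysis" "HOL-Computational_Algebra.Formal_Power_Series"
    "HOL-Library.Multiset"
begin

text \<open>Vectors of Z^n are modelled as integer-coordinate vectors in real^'n.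
  The family A = {a_1,...,a_m} is a function a on indices 1..m; the weights
  l_0,...,l_m are a function l :: nat => nat.\<close>

definition intvecs :: "(real^'n) set" where
  "intvecs = {x. \<forall>i. x $ i \<in> \<int>}"

definition latZ :: "nat \<Rightarrow> (nat \<Rightarrow> real^'n) \<Rightarrow> (real^'n) set" where
  "latZ m a = {(\<Sum>j=1..m. of_int (k j) *\<^sub>R a j) | k. True}"

definition latZplus :: "nat \<Rightarrow> (nat \<Rightarrow> real^'n) \<Rightarrow> real^'n \<Rightarrow> (real^'n) set" where
  "latZplus m a a0 = {z + of_int k0 *\<^sub>R a0 | z k0. z \<in> latZ m a}"

definition VZ :: "nat \<Rightarrow> (nat \<Rightarrow> real^'n) \<Rightarrow> (real^'n) set" where
  "VZ m a = span (a ` {1..m}) \<inter> intvecs"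

definition parallelepiped :: "nat \<Rightarrow> (nat \<Rightarrow> real^'n) \<Rightarrow> (real^'n) set" where
  "parallelepiped m a =
     {(\<Sum>j=1..m. c j *\<^sub>R a j) | c. \<forall>j\<in>{1..m}. 0 \<le> c j \<and> c j < 1}"

definition Bset :: "nat \<Rightarrow> (nat \<Rightarrow> real^'n) \<Rightarrow> (real^'n) set" where
  "Bset m a = VZ m a \<inter> parallelepiped m a"

definition is_coset :: "nat \<Rightarrow> (nat \<Rightarrow> real^'n) \<Rightarrow> real^'n \<Rightarrow> (real^'n) set \<Rightarrow> bool" where
  "is_coset m a a0 C \<longleftrightarrow> (\<exists>b\<in>VZ m a. C = (\<lambda>z. b + z) ` latZplus m a a0)"

definition coords :: "nat \<Rightarrow> (nat \<Rightarrow> real^'n) \<Rightarrow> real^'n \<Rightarrow> nat \<Rightarrow> real" where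
  "coords m a b = (THE v. (\<forall>r. r \<notin> {1..m} \<longrightarrow> v r = 0) \<and> b = (\<Sum>r=1..m. v r *\<^sub>R a r))"

definition interior_pt :: "nat \<Rightarrow> (nat \<Rightarrow> real^'n) \<Rightarrow> real^'n \<Rightarrow> bool" where
  "interior_pt m a b \<longleftrightarrow> (\<forall>r\<in>{1..m}. coords m a b r > 0)"

definition s0 :: "nat \<Rightarrow> (nat \<Rightarrow> real^'n) \<Rightarrow> real^'n \<Rightarrow> nat \<Rightarrow> real^'n \<Rightarrow> real^'n \<Rightarrow> nat" where
  "s0 m a a0 l0 bi bj = (THE s. s < l0 \<and> bj - (bi + of_nat s *\<^sub>R a0) \<in> latZ m a)"

definition svec :: "nat \<Rightarrow> (nat \<Rightarrow> real^'n) \<Rightarrow> real^'n \<Rightarrow> nat \<Rightarrow> real^'n \<Rightarrow> real^'n \<Rightarrow> nat \<Rightarrow> int" where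
  "svec m a a0 l0 bi bj = (THE s. (\<forall>r. r \<notin> {1..m} \<longrightarrow> s r = 0) \<and>
      bi + of_nat (s0 m a a0 l0 bi bj) *\<^sub>R a0 = bj - (\<Sum>r=1..m. of_int (s r) *\<^sub>R a r))"

text \<open>The s-th coefficient of the series F (coefficient of lambda^(s0 + s l0)).\<close>
definition Fcoeff :: "nat \<Rightarrow> (nat \<Rightarrow> real^'n) \<Rightarrow> real^'n \<Rightarrow> (nat \<Rightarrow> nat) \<Rightarrow> real^'n \<Rightarrow> real^'n \<Rightarrow> nat \<Rightarrow> complex" where
  "Fcoeff m a a0 l bi bj s =
     (\<Prod>r=1..m. \<Prod>\<sigma><l r. pochhammer
        (complex_of_real ((coords m a bj r - of_int (svec m a a0 (l 0) bi bj r) + of_nat \<sigma>) / of_nat (l r))) s)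
     / (\<Prod>t=1..l 0. pochhammer
        (complex_of_real ((of_nat (s0 m a a0 (l 0) bi bj) + of_nat t) / of_nat (l 0))) s)"

definition Fseries :: "nat \<Rightarrow> (nat \<Rightarrow> real^'n) \<Rightarrow> real^'n \<Rightarrow> (nat \<Rightarrow> nat) \<Rightarrow> real^'n \<Rightarrow> real^'n \<Rightarrow> complex fps" where
  "Fseries m a a0 l bi bj =
     fps_X ^ s0 m a a0 (l 0) bi bj * fps_compose (Abs_fps (Fcoeff m a a0 l bi bj)) (fps_X ^ l 0)"

text \<open>The set {beta_1,...,beta_{R_k}} (elements are distinct).\<close>
definition Beta :: "nat \<Rightarrow> (nat \<Rightarrow> real^'n) \<Rightarrow> real^'n \<Rightarrow> nat \<Rightarrow> (real^'n) set \<Rightarrow> real^'n \<Rightarrow> real set" where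
  "Beta m a a0 l0 Bk bi =
     {of_nat t / of_nat l0 | t. t \<in> {1..l0}}
     - {1 - of_nat (s0 m a a0 l0 bi bj) / of_nat l0 | bj. bj \<in> Bk \<and> \<not> interior_pt m a bj}"

definition Alpha :: "nat \<Rightarrow> (nat \<Rightarrow> real^'n) \<Rightarrow> real^'n \<Rightarrow> (nat \<Rightarrow> nat) \<Rightarrow> (real^'n) set \<Rightarrow> real^'n \<Rightarrow> real multiset" where
  "Alpha m a a0 l Bk bi =
     (\<Sum>r\<in>{1..m}. mset (map (\<lambda>\<sigma>. (coords m a bi r + of_nat \<sigma>) / of_nat (l r)) [0..<l r]))
     - mset_set {1 - of_nat (s0 m a a0 (l 0) bi bj) / of_nat (l 0) | bj. bj \<in> Bk \<and> \<not> interior_pt m a bj}"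

text \<open>Generalized formal series sum_q h(q) x^q, represented by the coefficient function
  h :: real => complex, whose support lies in finitely many sets gamma + N.\<close>
definition gen_series :: "(real \<Rightarrow> complex) \<Rightarrow> bool" where
  "gen_series h \<longleftrightarrow> (\<exists>\<Gamma>. finite \<Gamma> \<and> (\<forall>q. h q \<noteq> 0 \<longrightarrow> (\<exists>\<gamma>\<in>\<Gamma>. \<exists>n::nat. q = \<gamma> + of_nat n)))"

text \<open>Coefficient of x^q in
  (delta+beta_1-1)...(delta+beta_R-1) h - x (delta+alpha_1)...(delta+alpha_R) h,
  delta = x d/dx acting by delta x^q = q x^q.\<close>
definition hyp_op :: "real set \<Rightarrow> real multiset \<Rightarrow> (real \<Rightarrow> complex) \<Rightarrow> real \<Rightarrow> complex" where
  "hyp_op Be Al h q =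
     (\<Prod>\<beta>\<in>Be. complex_of_real (q + \<beta> - 1)) * h q
     - prod_mset (image_mset (\<lambda>\<alpha>. complex_of_real (q - 1 + \<alpha>)) Al) * h (q - 1)"

end

(*
  For b_j in B_k put gamma_j = s_0^(j) / l_0.  Since P(A) is a fundamental domain of ZA in V
  and, by gcd(l_0, ..., l_m) = 1, the class of a_0 has order exactly l_0 in V_Z / ZA, the map
  b_j |-> s_0^(j) is a bijection from B_k onto {0, ..., l_0 - 1}.  Hence the numbers 1 - gamma_j
  are exactly t / l_0 (t = 1, ..., l_0), and the beta's are the 1 - gamma_j with b_j interior.
  On x^gamma_j * sum_n c_n x^n the operator acts coefficientwise by
  c_(n+1) prod_beta (gamma_j + n + beta) - c_n prod_alpha (gamma_j + n + alpha), and the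
  Pochhammer quotients defining F satisfy exactly this recurrence: the lower parameters give the
  factors gamma_j + n + t / l_0, the upper ones gamma_j + n + (v_r^(i) + sigma) / l_r, and the
  values 1 - gamma_j of the boundary points occur in both lists and cancel.  Conversely, at the
  lowest point of its support a generalized-series solution forces a factor q + beta - 1 to
  vanish, so it lives on the grids gamma_j + N with b_j interior, and there the recurrence, whose
  left factors do not vanish, determines it from its leading coefficients.
*)
theory Submission
  imports Defs
begin

lemma fps_compose_X_power_nth:
  fixes f :: "'a::comm_ring_1 fps"
  assumes "k > 0"
  shows "fps_nth (f oo fps_X ^ k) n = (if k dvd n then fps_nth f (n div k) else 0)"
proof -
  have "fps_nth (f oo fps_X ^ k) n = (\<Sum>i\<in>{0..n}. if i = n div k \<and> k dvd n then fps_nth f i else 0)"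
    unfolding fps_compose_nth power_mult[symmetric] fps_X_power_nth
    by (rule sum.cong) (use assms in auto)
  also have "\<dots> = (if k dvd n then fps_nth f (n div k) else 0)"
    by (auto simp: sum.delta' div_le_dividend)
  finally show ?thesis .
qed

lemma prod_mset_sum_mset_map_upt:
  assumes "finite R"
  shows "(\<Prod>x\<in>#(\<Sum>r\<in>R. mset (map (g r) [0..<k r])). f x) = (\<Prod>r\<in>R. \<Prod>\<sigma><k r. f (g r \<sigma>))"
  using assms by (induction R rule: finite_induct)
    (simp_all add: prod_unfold_prod_mset multiset.map_comp comp_def atLeast0LessThan)

lemma prod_pochhammer_Suc:
  "(\<Prod>i\<in>I. pochhammer (x i) (Suc n)) = (\<Prod>i\<in>I. pochhammer (x i) n) * (\<Prod>i\<in>I. x i + of_nat n)"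
  by (simp add: pochhammer_Suc prod.distrib)

lemma pochhammer_of_real_pos_neq_0: "0 < x \<Longrightarrow> pochhammer (complex_of_real x) n \<noteq> 0"
  unfolding pochhammer_of_real of_real_eq_0_iff by (metis pochhammer_pos less_irrefl)

section \<open>Generalized series solutions of the hypergeometric operator\<close>

text \<open>The generalized series x^\<gamma> \<Sum>_n c n x^n, represented as in gen_series.\<close>
definition xpow_series :: "real \<Rightarrow> (nat \<Rightarrow> complex) \<Rightarrow> real \<Rightarrow> complex" where
  "xpow_series \<gamma> c q = (if \<exists>n::nat. q = \<gamma> + real n then c (nat \<lfloor>q - \<gamma>\<rfloor>) else 0)"

lemma xpow_series_grid [simp]: "xpow_series \<gamma> c (\<gamma> + real n) = c n"
  by (auto simp: xpow_series_def)

lemma xpow_series_nonzeroD: "xpow_series \<gamma> c q \<noteq> 0 \<Longrightarrow> \<exists>n::nat. q = \<gamma> + real n"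
  by (auto simp: xpow_series_def split: if_splits)

lemma xpow_series_off_grid:
  assumes "0 \<le> \<gamma>" "\<gamma> < 1" "0 \<le> \<gamma>'" "\<gamma>' < 1" "\<gamma>' \<noteq> \<gamma>"
  shows "xpow_series \<gamma>' c (\<gamma> + real n) = 0"
proof (rule ccontr)
  assume "xpow_series \<gamma>' c (\<gamma> + real n) \<noteq> 0"
  then obtain n' :: nat where "\<gamma> + real n = \<gamma>' + real n'"
    using xpow_series_nonzeroD by blast
  with assms have "n = n'" by linarith
  with \<open>\<gamma> + real n = \<gamma>' + real n'\<close> \<open>\<gamma>' \<noteq> \<gamma>\<close> show False by simp
qed

lemma hyp_op_shift:
  "hyp_op Be Al h (y + 1) =
     (\<Prod>\<beta>\<in>Be. complex_of_real (y + \<beta>)) * h (y + 1) - (\<Prod>\<alpha>\<in>#Al. complex_of_real (y + \<alpha>)) * h y"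
  by (simp add: hyp_op_def algebra_simps)

lemma hyp_op_xpow_series_eq_0:
  assumes "finite Be" "1 - \<gamma> \<in> Be"
    and rec: "\<And>n. c (Suc n) * (\<Prod>\<beta>\<in>Be. complex_of_real (\<gamma> + real n + \<beta>))
                 = c n * (\<Prod>\<alpha>\<in>#Al. complex_of_real (\<gamma> + real n + \<alpha>))"
  shows "hyp_op Be Al (xpow_series \<gamma> c) q = 0"
proof (cases "\<exists>n::nat. q = \<gamma> + real n")
  case True
  then obtain n :: nat where q: "q = \<gamma> + real n" by blast
  show ?thesis
  proof (cases n)
    case 0
    have "xpow_series \<gamma> c (q - 1) = 0"
      using xpow_series_nonzeroD[of \<gamma> c "q - 1"] q 0 by force
    moreover have "(\<Prod>\<beta>\<in>Be. complex_of_real (q + \<beta> - 1)) = 0"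
      using assms(1,2) q 0 by (force simp: prod_zero_iff)
    ultimately show ?thesis by (simp add: hyp_op_def)
  next
    case (Suc k)
    have q': "q = \<gamma> + real k + 1" and "\<gamma> + real k + 1 = \<gamma> + real (Suc k)"
      using q Suc by simp_all
    then have "xpow_series \<gamma> c (\<gamma> + real k + 1) = c (Suc k)"
      by (simp only: xpow_series_grid)
    then show ?thesis
      unfolding q' hyp_op_shift xpow_series_grid using rec[of k] by (simp add: mult.commute)
  qed
next
  case False
  have "xpow_series \<gamma> c q = 0"
    using False xpow_series_nonzeroD by blast
  moreover have "xpow_series \<gamma> c (q - 1) = 0"
  proof (rule ccontr)
    assume "xpow_series \<gamma> c (q - 1) \<noteq> 0"
    then obtain n :: nat where "q - 1 = \<gamma> + real n"
      using xpow_series_nonzeroD by blast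
    then have "q = \<gamma> + real (Suc n)" by simp
    with False show False by blast
  qed
  ultimately show ?thesis by (simp add: hyp_op_def)
qed

lemma hyp_op_solution_grid:
  assumes "finite Be" "\<forall>\<beta>\<in>Be. 0 < \<beta>" "0 \<le> \<gamma>"
    and sol: "\<And>q. hyp_op Be Al h q = 0"
    and "c 0 = 1"
    and rec: "\<And>n. c (Suc n) * (\<Prod>\<beta>\<in>Be. complex_of_real (\<gamma> + real n + \<beta>))
                 = c n * (\<Prod>\<alpha>\<in>#Al. complex_of_real (\<gamma> + real n + \<alpha>))"
  shows "h (\<gamma> + real n) = h \<gamma> * c n"
proof (induction n)
  case 0
  then show ?case using \<open>c 0 = 1\<close> by simp
next
  case (Suc n)
  define y where "y = \<gamma> + real n"
  define P where "P = (\<Prod>\<beta>\<in>Be. complex_of_real (y + \<beta>))"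
  define Q where "Q = (\<Prod>\<alpha>\<in>#Al. complex_of_real (y + \<alpha>))"
  have "P \<noteq> 0"
    unfolding P_def using assms(1-3) by (auto simp: y_def prod_zero_iff simp del: of_real_add)
  have "P * h (y + 1) = Q * h y"
    using sol[of "y + 1"] unfolding hyp_op_shift P_def Q_def by simp
  also have "\<dots> = h \<gamma> * (c n * Q)"
    using Suc.IH by (simp add: y_def)
  also have "c n * Q = c (Suc n) * P"
    using rec[of n] by (simp add: P_def Q_def y_def)
  also have "h \<gamma> * (c (Suc n) * P) = P * (h \<gamma> * c (Suc n))"
    by (simp only: mult.commute mult.left_commute)
  finally have "P * h (y + 1) = P * (h \<gamma> * c (Suc n))" .
  then have "h (y + 1) = h \<gamma> * c (Suc n)" using \<open>P \<noteq> 0\<close> by simp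
  moreover have "\<gamma> + real (Suc n) = y + 1" by (simp add: y_def)
  ultimately show ?case by metis
qed

text \<open>Indicial equation: at the lowest point q of a grid q - \<nat> meeting the support of a
  solution, h (q - 1) = 0 forces one of the factors q + \<beta> - 1 to vanish.\<close>
lemma hyp_op_solution_support:
  assumes "finite Be" "gen_series h" and sol: "\<And>q. hyp_op Be Al h q = 0" and "h q \<noteq> 0"
  shows "\<exists>\<beta>\<in>Be. \<exists>n::nat. q = 1 - \<beta> + real n"
proof -
  obtain \<Gamma> where \<Gamma>: "finite \<Gamma>" "\<And>q. h q \<noteq> 0 \<Longrightarrow> \<exists>\<gamma>\<in>\<Gamma>. \<exists>n::nat. q = \<gamma> + real n"
    using \<open>gen_series h\<close> unfolding gen_series_def by blast
  define N where "N = {n::nat. h (q - real n) \<noteq> 0}"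
  have "N \<subseteq> (\<Union>\<gamma>\<in>\<Gamma>. {..nat \<lfloor>q - \<gamma>\<rfloor>})"
  proof
    fix n assume "n \<in> N"
    then obtain \<gamma> k where "\<gamma> \<in> \<Gamma>" "q - real n = \<gamma> + real k"
      using \<Gamma>(2) unfolding N_def by blast
    moreover from this(2) have "n \<le> nat \<lfloor>q - \<gamma>\<rfloor>"
      by (simp add: le_nat_iff le_floor_iff)
    ultimately show "n \<in> (\<Union>\<gamma>\<in>\<Gamma>. {..nat \<lfloor>q - \<gamma>\<rfloor>})" by blast
  qed
  then have "finite N"
    by (rule finite_subset) (use \<Gamma>(1) in simp)
  moreover have "0 \<in> N" unfolding N_def using \<open>h q \<noteq> 0\<close> by simp
  ultimately have "Max N \<in> N" by (intro Max_in) auto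
  have "Suc (Max N) \<notin> N"
  proof
    assume "Suc (Max N) \<in> N"
    with Max_ge[OF \<open>finite N\<close> this] show False by simp
  qed
  define q' where "q' = q - real (Max N)"
  have "h q' \<noteq> 0" "h (q' - 1) = 0"
    using \<open>Max N \<in> N\<close> \<open>Suc (Max N) \<notin> N\<close> by (auto simp: N_def q'_def algebra_simps)
  then have "(\<Prod>\<beta>\<in>Be. complex_of_real (q' + \<beta> - 1)) = 0"
    using sol[of q'] by (simp add: hyp_op_def)
  then have "\<exists>\<beta>\<in>Be. complex_of_real (q' + \<beta> - 1) = 0"
    by (simp only: prod_zero_iff[OF \<open>finite Be\<close>])
  then obtain \<beta> where "\<beta> \<in> Be" "q' + \<beta> - 1 = 0"
    by (auto simp only: of_real_eq_0_iff)
  then have "q = 1 - \<beta> + real (Max N)"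
    by (simp add: q'_def)
  with \<open>\<beta> \<in> Be\<close> show ?thesis by blast
qed

lemma sum_xpow_series_grid:
  assumes "finite I" "inj_on \<gamma> I" "\<forall>i\<in>I. 0 \<le> \<gamma> i \<and> \<gamma> i < 1" "i \<in> I"
  shows "(\<Sum>j\<in>I. d j * xpow_series (\<gamma> j) (c j) (\<gamma> i + real n)) = d i * c i n"
proof -
  have "xpow_series (\<gamma> j) (c j) (\<gamma> i + real n) = 0" if "j \<in> I - {i}" for j
    using that assms(2-4) by (intro xpow_series_off_grid) (auto dest: inj_onD)
  then show ?thesis
    by (simp add: sum.remove[OF assms(1,4)])
qed

lemma xpow_series_family_independent:
  assumes "finite I" "inj_on \<gamma> I" "\<forall>i\<in>I. 0 \<le> \<gamma> i \<and> \<gamma> i < 1" "\<forall>i\<in>I. c i 0 = 1"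
    and "\<And>q. (\<Sum>i\<in>I. d i * xpow_series (\<gamma> i) (c i) q) = 0" "i \<in> I"
  shows "d i = 0"
  using assms(5)[of "\<gamma> i + real 0"] sum_xpow_series_grid[OF assms(1-3,6), of d c 0] assms(4,6)
  by simp

lemma hyp_op_solution_expansion:
  assumes "finite I" "inj_on \<gamma> I" "\<forall>i\<in>I. 0 \<le> \<gamma> i \<and> \<gamma> i < 1" "Be = (\<lambda>i. 1 - \<gamma> i) ` I"
    and "\<forall>i\<in>I. c i 0 = 1"
    and rec: "\<And>i n. i \<in> I \<Longrightarrow> c i (Suc n) * (\<Prod>\<beta>\<in>Be. complex_of_real (\<gamma> i + real n + \<beta>))
                 = c i n * (\<Prod>\<alpha>\<in>#Al. complex_of_real (\<gamma> i + real n + \<alpha>))"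
    and "gen_series h" and sol: "\<And>q. hyp_op Be Al h q = 0"
  shows "h q = (\<Sum>i\<in>I. h (\<gamma> i) * xpow_series (\<gamma> i) (c i) q)"
proof (cases "\<exists>i\<in>I. \<exists>n::nat. q = \<gamma> i + real n")
  case True
  then obtain i n where "i \<in> I" and q: "q = \<gamma> i + real n" by blast
  have "h q = h (\<gamma> i) * c i n"
    unfolding q using assms(1,3-5) \<open>i \<in> I\<close>
    by (intro hyp_op_solution_grid[OF _ _ _ sol _ rec]) auto
  then show ?thesis
    unfolding q using sum_xpow_series_grid[OF assms(1-3) \<open>i \<in> I\<close>] by simp
next
  case False
  have "h q = 0"
    using hyp_op_solution_support[OF _ \<open>gen_series h\<close> sol, of q] False assms(1,4) by auto
  moreover have "xpow_series (\<gamma> i) (c i) q = 0" if "i \<in> I" for i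
    using False that xpow_series_nonzeroD by blast
  ultimately show ?thesis by simp
qed

section \<open>Coordinates with respect to A and the lattice ZA\<close>

lemma mem_latZ: "x \<in> latZ m a \<longleftrightarrow> (\<exists>k. x = (\<Sum>j=1..m. of_int (k j) *\<^sub>R a j))"
  by (simp add: latZ_def)

lemma latZ_diff: "x \<in> latZ m a \<Longrightarrow> y \<in> latZ m a \<Longrightarrow> x - y \<in> latZ m a"
proof -
  assume "x \<in> latZ m a" "y \<in> latZ m a"
  then obtain k k' where "x = (\<Sum>j=1..m. of_int (k j) *\<^sub>R a j)" "y = (\<Sum>j=1..m. of_int (k' j) *\<^sub>R a j)"
    unfolding mem_latZ by blast
  then have "x - y = (\<Sum>j=1..m. of_int (k j - k' j) *\<^sub>R a j)"
    by (simp add: sum_subtractf scaleR_diff_left)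
  then show ?thesis unfolding mem_latZ by (rule exI[of _ "\<lambda>j. k j - k' j"])
qed

lemma zero_in_latZ: "0 \<in> latZ m a"
  unfolding mem_latZ by (auto intro!: exI[of _ "\<lambda>_. 0"])

lemma latZ_uminus: "x \<in> latZ m a \<Longrightarrow> - x \<in> latZ m a"
  using latZ_diff[OF zero_in_latZ] by fastforce

lemma latZ_add: "x \<in> latZ m a \<Longrightarrow> y \<in> latZ m a \<Longrightarrow> x + y \<in> latZ m a"
  using latZ_diff[OF _ latZ_uminus] by fastforce

lemma latZ_subset_intvecs:
  assumes "\<forall>j\<in>{1..m}. a j \<in> intvecs"
  shows "latZ m a \<subseteq> intvecs"
  using assms by (auto simp: latZ_def intvecs_def sum_component intro!: Ints_sum Ints_mult)

lemma sum_in_span: "(\<Sum>r=1..m. x r *\<^sub>R a r) \<in> span (a ` {1..m})"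
  by (intro span_sum span_scale span_base) auto

lemma parallelepiped_subset_span: "parallelepiped m a \<subseteq> span (a ` {1..m})"
  unfolding parallelepiped_def using sum_in_span by blast

locale independent_family =
  fixes a :: "nat \<Rightarrow> real^'n" and m :: nat
  assumes a_inj: "inj_on a {1..m}" and a_independent: "independent (a ` {1..m})"
begin

lemma sum_scaleR_eq_imp_coeff_eq:
  assumes "(\<Sum>r=1..m. x r *\<^sub>R a r) = (\<Sum>r=1..m. y r *\<^sub>R a r)" "r \<in> {1..m}"
  shows "x r = y r"
proof -
  define u where "u v = x (inv_into {1..m} a v) - y (inv_into {1..m} a v)" for v
  have "(\<Sum>v\<in>a ` {1..m}. u v *\<^sub>R v) = (\<Sum>r=1..m. u (a r) *\<^sub>R a r)"
    by (rule sum.reindex[OF a_inj, unfolded comp_def])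
  also have "\<dots> = (\<Sum>r=1..m. (x r - y r) *\<^sub>R a r)"
    by (intro sum.cong refl) (simp only: u_def inv_into_f_f[OF a_inj])
  also have "\<dots> = 0"
    using assms(1) by (simp add: scaleR_diff_left sum_subtractf)
  finally have "u (a r) = 0"
    using real_vector.independentD[OF a_independent] assms(2) by blast
  then show ?thesis
    by (simp only: u_def inv_into_f_f[OF a_inj assms(2)] right_minus_eq)
qed

lemma span_eq_sum:
  assumes "b \<in> span (a ` {1..m})"
  obtains x where "b = (\<Sum>r=1..m. x r *\<^sub>R a r)"
proof -
  obtain u where "b = (\<Sum>v\<in>a ` {1..m}. u v *\<^sub>R v)"
    using assms real_vector.span_finite[of "a ` {1..m}"] by auto
  also have "\<dots> = (\<Sum>r=1..m. u (a r) *\<^sub>R a r)"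
    by (rule sum.reindex[OF a_inj, unfolded comp_def])
  finally show ?thesis by (rule that)
qed

lemma coords_sum:
  assumes "r \<in> {1..m}"
  shows "coords m a (\<Sum>r=1..m. x r *\<^sub>R a r) r = x r"
proof -
  define v where "v r = (if r \<in> {1..m} then x r else 0)" for r
  have sum_v: "(\<Sum>r=1..m. v r *\<^sub>R a r) = (\<Sum>r=1..m. x r *\<^sub>R a r)"
    by (simp add: v_def)
  have "coords m a (\<Sum>r=1..m. x r *\<^sub>R a r) = v"
    unfolding coords_def
  proof (rule the_equality)
    fix w
    assume w: "(\<forall>r. r \<notin> {1..m} \<longrightarrow> w r = 0) \<and> (\<Sum>r=1..m. x r *\<^sub>R a r) = (\<Sum>r=1..m. w r *\<^sub>R a r)"
    show "w = v"
    proof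
      fix r
      show "w r = v r"
        using w sum_scaleR_eq_imp_coeff_eq[of w v r] sum_v by (cases "r \<in> {1..m}") (auto simp: v_def)
    qed
  qed (simp add: v_def)
  then show ?thesis
    using assms by (simp add: v_def)
qed

lemma sum_coords:
  assumes "b \<in> span (a ` {1..m})"
  shows "(\<Sum>r=1..m. coords m a b r *\<^sub>R a r) = b"
proof -
  obtain x where b: "b = (\<Sum>r=1..m. x r *\<^sub>R a r)"
    using span_eq_sum[OF assms] .
  then have "coords m a b r = x r" if "r \<in> {1..m}" for r
    using coords_sum[OF that] by simp
  then have "(\<Sum>r=1..m. coords m a b r *\<^sub>R a r) = (\<Sum>r=1..m. x r *\<^sub>R a r)"
    by (intro sum.cong refl) simp
  with b show ?thesis by simp
qed

lemma parallelepiped_coords: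
  assumes "b \<in> parallelepiped m a" "r \<in> {1..m}"
  shows "0 \<le> coords m a b r \<and> coords m a b r < 1"
proof -
  obtain c where "b = (\<Sum>j=1..m. c j *\<^sub>R a j)" "\<forall>j\<in>{1..m}. 0 \<le> c j \<and> c j < 1"
    using assms(1) unfolding parallelepiped_def by blast
  then show ?thesis
    using coords_sum[OF assms(2), of c] assms(2) by simp
qed

lemma parallelepiped_latZ_diff_eq:
  assumes "b \<in> parallelepiped m a" "b' \<in> parallelepiped m a" "b - b' \<in> latZ m a"
  shows "b = b'"
proof -
  obtain c c' k where
    c: "b = (\<Sum>r=1..m. c r *\<^sub>R a r)" "\<forall>r\<in>{1..m}. 0 \<le> c r \<and> c r < 1" and
    c': "b' = (\<Sum>r=1..m. c' r *\<^sub>R a r)" "\<forall>r\<in>{1..m}. 0 \<le> c' r \<and> c' r < 1" and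
    k: "b - b' = (\<Sum>r=1..m. of_int (k r) *\<^sub>R a r)"
    using assms unfolding parallelepiped_def mem_latZ by blast
  have "c r = c' r" if r: "r \<in> {1..m}" for r
  proof -
    have "(\<Sum>r=1..m. (c r - c' r) *\<^sub>R a r) = (\<Sum>r=1..m. of_int (k r) *\<^sub>R a r)"
      using c(1) c'(1) k by (simp add: scaleR_diff_left sum_subtractf)
    then have "c r - c' r = of_int (k r)"
      by (rule sum_scaleR_eq_imp_coeff_eq[where x = "\<lambda>r. c r - c' r" and y = "\<lambda>r. of_int (k r)", OF _ r])
    moreover have "\<bar>c r - c' r\<bar> < 1"
      using c(2) c'(2) r by fastforce
    ultimately have "\<bar>k r\<bar> < 1" by linarith
    with \<open>c r - c' r = of_int (k r)\<close> show ?thesis by simp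
  qed
  then show ?thesis
    using c(1) c'(1) by simp
qed

lemma span_decompose_latZ_parallelepiped:
  assumes "y \<in> span (a ` {1..m})"
  obtains z where "z \<in> latZ m a" "y - z \<in> parallelepiped m a"
proof -
  obtain x where x: "y = (\<Sum>r=1..m. x r *\<^sub>R a r)"
    using span_eq_sum[OF assms] .
  define z where "z = (\<Sum>r=1..m. of_int \<lfloor>x r\<rfloor> *\<^sub>R a r)"
  have "z \<in> latZ m a"
    unfolding z_def mem_latZ by (rule exI) (rule refl)
  moreover have "y - z = (\<Sum>r=1..m. frac (x r) *\<^sub>R a r)"
    by (simp add: x z_def frac_def scaleR_diff_left sum_subtractf)
  then have "y - z \<in> parallelepiped m a"
    unfolding parallelepiped_def by (auto intro!: exI[of _ "\<lambda>r. frac (x r)"] frac_lt_1)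
  ultimately show ?thesis by (rule that)
qed

end

locale circuit = independent_family +
  fixes a0 :: "real^'n" and l :: "nat \<Rightarrow> nat"
  assumes a_int: "\<forall>j\<in>{1..m}. a j \<in> intvecs" and a0_int: "a0 \<in> intvecs"
    and l_pos: "\<forall>j\<le>m. l j > 0" and l_Gcd: "Gcd (l ` {0..m}) = 1"
    and circuit_relation: "of_nat (l 0) *\<^sub>R a0 = (\<Sum>j=1..m. of_nat (l j) *\<^sub>R a j)"
begin

lemma l0_pos: "l 0 > 0"
  using l_pos by simp

lemma a0_eq_sum: "a0 = (\<Sum>j=1..m. (real (l j) / real (l 0)) *\<^sub>R a j)"
proof -
  have "a0 = (1 / real (l 0)) *\<^sub>R (of_nat (l 0) *\<^sub>R a0)"
    using l0_pos by simp
  then show ?thesis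
    unfolding circuit_relation by (simp add: scaleR_sum_right)
qed

lemma a0_in_span: "a0 \<in> span (a ` {1..m})"
  by (subst a0_eq_sum) (intro span_sum span_scale span_base; simp)

lemma scaleR_a0_in_latZ_iff: "of_int k *\<^sub>R a0 \<in> latZ m a \<longleftrightarrow> int (l 0) dvd k"
proof
  assume "int (l 0) dvd k"
  then obtain z where "k = z * int (l 0)" by (metis dvd_def mult.commute)
  then have "of_int k *\<^sub>R a0 = (\<Sum>j=1..m. of_int (z * int (l j)) *\<^sub>R a j)"
    by (simp add: circuit_relation scaleR_sum_right flip: scaleR_scaleR)
  then show "of_int k *\<^sub>R a0 \<in> latZ m a"
    unfolding mem_latZ by (rule exI[of _ "\<lambda>j. z * int (l j)"])
next
  assume "of_int k *\<^sub>R a0 \<in> latZ m a"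
  then obtain kk where kk: "of_int k *\<^sub>R a0 = (\<Sum>j=1..m. of_int (kk j) *\<^sub>R a j)"
    unfolding mem_latZ by blast
  have "l 0 dvd nat \<bar>k\<bar> * l j" if "j \<in> {0..m}" for j
  proof (cases "j = 0")
    case False
    with that have j: "j \<in> {1..m}" by auto
    have "of_int k *\<^sub>R a0 = (\<Sum>j=1..m. (of_int k * (real (l j) / real (l 0))) *\<^sub>R a j)"
      by (subst a0_eq_sum) (simp add: scaleR_sum_right)
    then have "of_int (kk j) = of_int k * (real (l j) / real (l 0))"
      using sum_scaleR_eq_imp_coeff_eq[OF _ j, of "\<lambda>j. of_int (kk j)"] kk by simp
    then have "real_of_int (kk j * int (l 0)) = real_of_int (k * int (l j))"
      using l0_pos by (simp add: field_simps)
    then have "int (l 0) dvd \<bar>k\<bar> * int (l j)"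
      by (metis of_int_eq_iff dvd_triv_right abs_mult abs_of_nat)
    then show ?thesis
      using int_dvd_int_iff[of "l 0" "nat \<bar>k\<bar> * l j"] by simp
  qed simp
  then have "l 0 dvd Gcd ((*) (nat \<bar>k\<bar>) ` l ` {0..m})"
    by (auto simp: dvd_Gcd_iff)
  then have "l 0 dvd nat \<bar>k\<bar>"
    by (simp add: Gcd_mult l_Gcd)
  then show "int (l 0) dvd k"
    using int_dvd_int_iff[of "l 0" "nat \<bar>k\<bar>"] by simp
qed

lemma latZ_residue_unique:
  assumes "s < l 0" "s' < l 0"
    and "x - (y + of_nat s *\<^sub>R a0) \<in> latZ m a" "x - (y + of_nat s' *\<^sub>R a0) \<in> latZ m a"
  shows "s = s'"
proof -
  have "of_int (int s' - int s) *\<^sub>R a0 = (x - (y + of_nat s *\<^sub>R a0)) - (x - (y + of_nat s' *\<^sub>R a0))"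
    by (simp add: algebra_simps)
  then have "int (l 0) dvd int s' - int s"
    using latZ_diff[OF assms(3,4)] scaleR_a0_in_latZ_iff by metis
  with assms(1,2) show ?thesis
    by (simp add: mod_eq_dvd_iff[symmetric])
qed

end

section \<open>The points of B_k and their exponents\<close>

locale circuit_coset = circuit +
  fixes C :: "(real^'n) set" and bi :: "real^'n"
  assumes coset: "is_coset m a a0 C" and bi_in: "bi \<in> Bset m a \<inter> C"
    and bi_interior: "interior_pt m a bi"
begin

abbreviation "S0 bj \<equiv> s0 m a a0 (l 0) bi bj"
abbreviation "Bk \<equiv> Bset m a \<inter> C"
abbreviation "Ik \<equiv> {b \<in> Bk. interior_pt m a b}"
abbreviation "betas \<equiv> Beta m a a0 (l 0) Bk bi"
abbreviation "alphas \<equiv> Alpha m a a0 l Bk bi"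

lemma bi_span: "bi \<in> span (a ` {1..m})"
  using bi_in by (simp add: Bset_def VZ_def)

lemma coset_diff:
  assumes "x \<in> C" "y \<in> C"
  obtains z k where "z \<in> latZ m a" "x - y = z + of_int k *\<^sub>R a0"
proof -
  obtain b0 where "C = (\<lambda>z. b0 + z) ` latZplus m a a0"
    using coset unfolding is_coset_def by blast
  then obtain z k z' k' where "z \<in> latZ m a" "x = b0 + (z + of_int k *\<^sub>R a0)"
      and "z' \<in> latZ m a" "y = b0 + (z' + of_int k' *\<^sub>R a0)"
    using assms unfolding latZplus_def by blast
  then have "z - z' \<in> latZ m a" "x - y = (z - z') + of_int (k - k') *\<^sub>R a0"
    by (auto simp: latZ_diff algebra_simps)
  then show ?thesis by (rule that)
qed

lemma coset_add:
  assumes "x \<in> C" "z \<in> latZ m a"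
  shows "x + z + of_int k *\<^sub>R a0 \<in> C"
proof -
  obtain b0 where C: "C = (\<lambda>z. b0 + z) ` latZplus m a a0"
    using coset unfolding is_coset_def by blast
  then obtain z1 k1 where "z1 \<in> latZ m a" "x = b0 + (z1 + of_int k1 *\<^sub>R a0)"
    using assms(1) unfolding latZplus_def by blast
  then have "z1 + z \<in> latZ m a" "x + z + of_int k *\<^sub>R a0 = b0 + ((z1 + z) + of_int (k1 + k) *\<^sub>R a0)"
    using assms(2) by (auto simp: latZ_add algebra_simps)
  then show ?thesis
    unfolding C latZplus_def by blast
qed

lemma s0_exists:
  assumes "bj \<in> C"
  shows "\<exists>s < l 0. bj - (bi + of_nat s *\<^sub>R a0) \<in> latZ m a"
proof -
  obtain z k where z: "z \<in> latZ m a" "bj - bi = z + of_int k *\<^sub>R a0"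
    using coset_diff[OF assms] bi_in by blast
  define s where "s = nat (k mod int (l 0))"
  have "s < l 0"
    using l0_pos by (simp add: s_def nat_less_iff)
  have "real s = of_int (k mod int (l 0))"
    using l0_pos by (simp add: s_def)
  then have "bj - (bi + of_nat s *\<^sub>R a0) = z + of_int (k - k mod int (l 0)) *\<^sub>R a0"
    using z(2) by (simp add: algebra_simps scaleR_diff_left)
  also have "\<dots> \<in> latZ m a"
    using z(1) by (intro latZ_add) (simp_all only: scaleR_a0_in_latZ_iff dvd_minus_mod)
  finally show ?thesis
    using \<open>s < l 0\<close> by blast
qed

lemma s0_spec:
  assumes "bj \<in> C"
  shows "S0 bj < l 0" "bj - (bi + of_nat (S0 bj) *\<^sub>R a0) \<in> latZ m a"
proof -
  have "\<exists>!s. s < l 0 \<and> bj - (bi + of_nat s *\<^sub>R a0) \<in> latZ m a"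
    using s0_exists[OF assms] latZ_residue_unique by blast
  from theI'[OF this] show "S0 bj < l 0" "bj - (bi + of_nat (S0 bj) *\<^sub>R a0) \<in> latZ m a"
    unfolding s0_def by blast+
qed

lemma s0_eqI:
  assumes "bj \<in> C" "s < l 0" "bj - (bi + of_nat s *\<^sub>R a0) \<in> latZ m a"
  shows "S0 bj = s"
  using latZ_residue_unique[OF s0_spec(1)[OF assms(1)] assms(2) s0_spec(2)[OF assms(1)] assms(3)] .

lemma svec_eq:
  assumes "bj - (bi + of_nat (S0 bj) *\<^sub>R a0) = (\<Sum>r=1..m. of_int (k r) *\<^sub>R a r)" "r \<in> {1..m}"
  shows "svec m a a0 (l 0) bi bj r = k r"
proof -
  define k' where "k' r = (if r \<in> {1..m} then k r else 0)" for r
  have sum_k': "(\<Sum>r=1..m. of_int (k' r) *\<^sub>R a r) = (\<Sum>r=1..m. of_int (k r) *\<^sub>R a r)"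
    by (simp add: k'_def)
  have "svec m a a0 (l 0) bi bj = k'"
    unfolding svec_def
  proof (rule the_equality)
    fix w
    assume w: "(\<forall>r. r \<notin> {1..m} \<longrightarrow> w r = 0) \<and>
      bi + of_nat (S0 bj) *\<^sub>R a0 = bj - (\<Sum>r=1..m. of_int (w r) *\<^sub>R a r)"
    then have "(\<Sum>r=1..m. of_int (w r) *\<^sub>R a r) = bj - (bi + of_nat (S0 bj) *\<^sub>R a0)"
      by (simp add: eq_diff_eq add.commute)
    also have "\<dots> = (\<Sum>r=1..m. of_int (k' r) *\<^sub>R a r)"
      using assms(1) sum_k' by simp
    finally show "w = k'"
      using w sum_scaleR_eq_imp_coeff_eq[where x = "\<lambda>r. of_int (w r)" and y = "\<lambda>r. of_int (k' r)"]
      by (auto simp: k'_def)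
  qed (use assms(1) sum_k' in \<open>auto simp: k'_def algebra_simps\<close>)
  then show ?thesis
    using assms(2) by (simp add: k'_def)
qed

lemma coords_s0_svec:
  assumes "bj \<in> C" "r \<in> {1..m}"
  shows "coords m a bj r = coords m a bi r + real (S0 bj) * real (l r) / real (l 0)
                            + of_int (svec m a a0 (l 0) bi bj r)"
proof -
  obtain k where k: "bj - (bi + of_nat (S0 bj) *\<^sub>R a0) = (\<Sum>r=1..m. of_int (k r) *\<^sub>R a r)"
    using s0_spec(2)[OF assms(1)] unfolding mem_latZ by blast
  define v where "v r = coords m a bi r + real (S0 bj) * real (l r) / real (l 0) + of_int (k r)" for r
  have "bj = bi + of_nat (S0 bj) *\<^sub>R a0 + (\<Sum>r=1..m. of_int (k r) *\<^sub>R a r)"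
    using k by (metis diff_eq_eq add.commute)
  also have "\<dots> = (\<Sum>r=1..m. coords m a bi r *\<^sub>R a r)
      + of_nat (S0 bj) *\<^sub>R (\<Sum>r=1..m. (real (l r) / real (l 0)) *\<^sub>R a r) + (\<Sum>r=1..m. of_int (k r) *\<^sub>R a r)"
    using sum_coords[OF bi_span] a0_eq_sum by simp
  also have "\<dots> = (\<Sum>r=1..m. v r *\<^sub>R a r)"
    unfolding v_def by (simp add: sum.distrib scaleR_add_left scaleR_sum_right)
  finally have "coords m a bj r = v r"
    using coords_sum[OF assms(2), of v] by simp
  then show ?thesis
    using svec_eq[OF k assms(2)] by (simp add: v_def)
qed

lemma s0_inj_on: "inj_on S0 Bk"
proof (rule inj_onI)
  fix bj bk
  assume "bj \<in> Bk" "bk \<in> Bk" "S0 bj = S0 bk"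
  then have "(bj - (bi + of_nat (S0 bj) *\<^sub>R a0)) - (bk - (bi + of_nat (S0 bk) *\<^sub>R a0)) \<in> latZ m a"
    using s0_spec(2) latZ_diff by blast
  then have "bj - bk \<in> latZ m a"
    using \<open>S0 bj = S0 bk\<close> by simp
  then show "bj = bk"
    using parallelepiped_latZ_diff_eq \<open>bj \<in> Bk\<close> \<open>bk \<in> Bk\<close> by (auto simp: Bset_def)
qed

lemma s0_surj:
  assumes "s < l 0"
  shows "\<exists>bj\<in>Bk. S0 bj = s"
proof -
  define y where "y = bi + of_nat s *\<^sub>R a0"
  have "y \<in> span (a ` {1..m})"
    unfolding y_def using bi_span a0_in_span by (intro span_add span_scale)
  then obtain z where z: "z \<in> latZ m a" "y - z \<in> parallelepiped m a"
    by (rule span_decompose_latZ_parallelepiped)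
  have "y - z \<in> intvecs"
    using bi_in a0_int latZ_subset_intvecs[OF a_int] z(1)
    by (auto simp: y_def intvecs_def Bset_def VZ_def)
  moreover have "y - z \<in> C"
    using coset_add[OF _ latZ_uminus[OF z(1)], of bi "int s"] bi_in by (simp add: y_def algebra_simps)
  moreover have "S0 (y - z) = s"
    using s0_eqI[OF \<open>y - z \<in> C\<close> assms] latZ_uminus[OF z(1)] by (simp add: y_def)
  ultimately show ?thesis
    using z(2) parallelepiped_subset_span by (auto simp: Bset_def VZ_def)
qed

lemma bij_betw_s0: "bij_betw S0 Bk {..<l 0}"
  unfolding bij_betw_def using s0_inj_on s0_spec(1) s0_surj by fastforce

lemma finite_Bk: "finite Bk"
  using bij_betw_finite[OF bij_betw_s0] by simp

lemma finite_Ik: "finite Ik"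
  using finite_Bk by (rule rev_finite_subset) auto

definition series_exponent :: "real^'n \<Rightarrow> real" where
  "series_exponent bj = real (S0 bj) / real (l 0)"

abbreviation beta_of :: "real^'n \<Rightarrow> real" where
  "beta_of bj \<equiv> 1 - series_exponent bj"

lemma series_exponent_range: "bj \<in> C \<Longrightarrow> 0 \<le> series_exponent bj \<and> series_exponent bj < 1"
  using s0_spec(1) l0_pos by (simp add: series_exponent_def)

lemma inj_on_series_exponent: "inj_on series_exponent Bk"
  using s0_inj_on l0_pos by (auto simp: inj_on_def series_exponent_def)

lemma inj_on_beta_of: "inj_on beta_of Bk"
  using inj_on_series_exponent by (auto simp: inj_on_def)

lemma beta_of_image: "beta_of ` Bk = {of_nat t / of_nat (l 0) | t. t \<in> {1..l 0}}"
proof (intro equalityI subsetI)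
  fix \<beta> assume "\<beta> \<in> beta_of ` Bk"
  then obtain bj where "bj \<in> Bk" "\<beta> = 1 - series_exponent bj" by blast
  moreover have "S0 bj < l 0" using s0_spec(1) \<open>bj \<in> Bk\<close> by blast
  ultimately have "\<beta> = real (l 0 - S0 bj) / real (l 0)" "l 0 - S0 bj \<in> {1..l 0}"
    using l0_pos by (auto simp: series_exponent_def field_simps of_nat_diff)
  then show "\<beta> \<in> {of_nat t / of_nat (l 0) | t. t \<in> {1..l 0}}" by blast
next
  fix \<beta> :: real assume "\<beta> \<in> {of_nat t / of_nat (l 0) | t. t \<in> {1..l 0}}"
  then obtain t where t: "t \<in> {1..l 0}" "\<beta> = real t / real (l 0)" by blast
  then obtain bj where "bj \<in> Bk" "S0 bj = l 0 - t"
    using s0_surj[of "l 0 - t"] by auto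
  moreover have "\<beta> = 1 - real (l 0 - t) / real (l 0)"
    using t l0_pos by (simp add: field_simps of_nat_diff)
  ultimately have "\<beta> = 1 - series_exponent bj" by (simp add: series_exponent_def)
  with \<open>bj \<in> Bk\<close> show "\<beta> \<in> beta_of ` Bk" by blast
qed

lemma boundary_betas_eq:
  "{1 - of_nat (S0 bj) / of_nat (l 0) | bj. bj \<in> Bk \<and> \<not> interior_pt m a bj} = beta_of ` (Bk - Ik)"
  by (auto simp: series_exponent_def)

lemma betas_eq: "betas = beta_of ` Ik"
proof -
  have "beta_of ` Bk - beta_of ` (Bk - Ik) = beta_of ` (Bk - (Bk - Ik))"
    by (rule inj_on_image_set_diff[OF inj_on_beta_of, symmetric]) auto
  moreover have "Bk - (Bk - Ik) = Ik" by blast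
  ultimately show ?thesis
    unfolding Beta_def boundary_betas_eq beta_of_image[symmetric] by simp
qed

section \<open>The parameters and the coefficient recurrence\<close>

definition all_alphas :: "real multiset" where
  "all_alphas = (\<Sum>r\<in>{1..m}. mset (map (\<lambda>\<sigma>. (coords m a bi r + of_nat \<sigma>) / of_nat (l r)) [0..<l r]))"

text \<open>If the r-th coordinate of bj vanishes, then beta_of bj = (v_r + \<sigma>) / l_r with
  v_r the r-th coordinate of bi and \<sigma> = l_r + s_r; that 0 \<le> \<sigma> < l_r needs 0 < v_r < 1,
  i.e. that bi is an interior point.\<close>
lemma boundary_beta_in_all_alphas:
  assumes "bj \<in> Bk" "\<not> interior_pt m a bj"
  shows "beta_of bj \<in># all_alphas"
proof -
  obtain r where r: "r \<in> {1..m}" "coords m a bj r = 0"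
    using assms parallelepiped_coords[of bj] by (force simp: interior_pt_def Bset_def)
  define v where "v = coords m a bi r"
  define u where "u = real (S0 bj) * real (l r) / real (l 0)"
  define s where "s = svec m a a0 (l 0) bi bj r"
  have "0 < v" "v < 1"
    using bi_interior bi_in parallelepiped_coords[of bi r] r(1) by (auto simp: interior_pt_def Bset_def v_def)
  moreover have "l r > 0"
    using l_pos r(1) by simp
  moreover have "0 \<le> u" "u < real (l r)"
    using s0_spec(1)[of bj] assms(1) l0_pos \<open>l r > 0\<close> by (auto simp: u_def field_simps)
  moreover have "0 = v + u + of_int s"
    using coords_s0_svec[of bj r] assms(1) r by (simp add: u_def v_def s_def)
  ultimately have "0 \<le> int (l r) + s" "int (l r) + s < int (l r)"
    by linarith+
  then have "nat (int (l r) + s) \<in> set [0..<l r]"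
    by auto
  moreover have "(v + real (nat (int (l r) + s))) / real (l r) = 1 - series_exponent bj"
    using \<open>0 = v + u + of_int s\<close> \<open>0 \<le> int (l r) + s\<close> \<open>l r > 0\<close> l0_pos
    by (simp add: u_def series_exponent_def field_simps)
  ultimately show ?thesis
    unfolding all_alphas_def using r(1) by (force simp: set_mset_sum v_def)
qed

lemma all_alphas_eq: "all_alphas = alphas + mset_set (beta_of ` (Bk - Ik))"
proof -
  have "mset_set (beta_of ` (Bk - Ik)) \<subseteq># mset_set (set_mset all_alphas)"
    using boundary_beta_in_all_alphas by (intro subset_imp_msubset_mset_set) auto
  also have "\<dots> \<subseteq># all_alphas"
    by (rule mset_set_set_mset_msubset)
  finally show ?thesis
    unfolding Alpha_def boundary_betas_eq all_alphas_def[symmetric] by (simp add: subset_mset.diff_add)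
qed

lemma prod_beta_of_split:
  "(\<Prod>\<beta>\<in>beta_of ` Bk. f \<beta>)
     = (\<Prod>\<beta>\<in>betas. f \<beta>) * (\<Prod>\<beta>\<in>beta_of ` (Bk - Ik). f \<beta>)"
proof -
  have "beta_of ` Bk = beta_of ` Ik \<union> beta_of ` (Bk - Ik)"
    by blast
  moreover have "beta_of ` Ik \<inter> beta_of ` (Bk - Ik) = {}"
    using inj_on_image_Int[OF inj_on_beta_of, of Ik "Bk - Ik"] by auto
  ultimately show ?thesis
    unfolding betas_eq using finite_Bk finite_Ik by (simp add: prod.union_disjoint)
qed

lemma Fcoeff_0: "Fcoeff m a a0 l bi bj 0 = 1"
  by (simp add: Fcoeff_def)

lemma Fcoeff_Suc_all:
  assumes "bj \<in> C"
  shows "Fcoeff m a a0 l bi bj (Suc n) * (\<Prod>\<beta>\<in>beta_of ` Bk. complex_of_real (series_exponent bj + real n + \<beta>))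
       = Fcoeff m a a0 l bi bj n * (\<Prod>\<alpha>\<in>#all_alphas. complex_of_real (series_exponent bj + real n + \<alpha>))"
proof -
  define F where "F x = complex_of_real (series_exponent bj + real n + x)" for x
  define A where "A r \<sigma> = complex_of_real
    ((coords m a bj r - of_int (svec m a a0 (l 0) bi bj r) + real \<sigma>) / real (l r))" for r \<sigma>
  define D where "D t = complex_of_real ((real (S0 bj) + real t) / real (l 0))" for t
  define Num where "Num k = (\<Prod>r=1..m. \<Prod>\<sigma><l r. pochhammer (A r \<sigma>) k)" for k
  define Den where "Den k = (\<Prod>t=1..l 0. pochhammer (D t) k)" for k
  have Fcoeff: "Fcoeff m a a0 l bi bj k = Num k / Den k" for k
    unfolding Fcoeff_def Num_def Den_def A_def D_def ..
  have "A r \<sigma> + of_nat n = F ((coords m a bi r + real \<sigma>) / real (l r))" if "r \<in> {1..m}" for r \<sigma>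
    using coords_s0_svec[OF assms that] l_pos that l0_pos
    by (simp add: A_def F_def series_exponent_def add_divide_distrib)
  then have Num_Suc: "Num (Suc n) = Num n * (\<Prod>\<alpha>\<in>#all_alphas. F \<alpha>)"
    unfolding Num_def all_alphas_def prod_mset_sum_mset_map_upt[OF finite_atLeastAtMost]
    by (simp add: prod_pochhammer_Suc prod.distrib)
  have "D t + of_nat n = F (real t / real (l 0))" for t
    using l0_pos by (simp add: D_def F_def series_exponent_def add_divide_distrib)
  moreover have "beta_of ` Bk = (\<lambda>t. real t / real (l 0)) ` {1..l 0}"
    unfolding beta_of_image by blast
  moreover have "inj_on (\<lambda>t. real t / real (l 0)) {1..l 0}"
    using l0_pos by (auto simp: inj_on_def)
  ultimately have Den_Suc: "Den (Suc n) = Den n * (\<Prod>\<beta>\<in>beta_of ` Bk. F \<beta>)"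
    unfolding Den_def by (simp add: prod_pochhammer_Suc prod.reindex)
  have "pochhammer (D t) (Suc n) \<noteq> 0" if "t \<in> {1..l 0}" for t
    unfolding D_def using that l0_pos by (intro pochhammer_of_real_pos_neq_0) auto
  then have "Den (Suc n) \<noteq> 0"
    unfolding Den_def by simp
  then show ?thesis
    unfolding Fcoeff Num_Suc Den_Suc F_def by (simp add: field_simps)
qed

text \<open>The values beta_of bk of the boundary points bk occur in both products of
  Fcoeff_Suc_all and cancel.\<close>
lemma Fcoeff_Suc:
  assumes "bj \<in> C"
  shows "Fcoeff m a a0 l bi bj (Suc n) * (\<Prod>\<beta>\<in>betas. complex_of_real (series_exponent bj + real n + \<beta>))
       = Fcoeff m a a0 l bi bj n * (\<Prod>\<alpha>\<in>#alphas. complex_of_real (series_exponent bj + real n + \<alpha>))"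
proof -
  define f where "f \<beta> = complex_of_real (series_exponent bj + real n + \<beta>)" for \<beta>
  define X where "X = beta_of ` (Bk - Ik)"
  have "prod f X \<noteq> 0"
    unfolding X_def f_def using finite_Bk series_exponent_range[OF assms] series_exponent_range
    by (fastforce simp: prod_zero_iff simp del: of_real_add)
  moreover have "Fcoeff m a a0 l bi bj (Suc n) * prod f (betas) * prod f X
      = Fcoeff m a a0 l bi bj n * (\<Prod>\<alpha>\<in>#alphas. f \<alpha>) * prod f X"
    using Fcoeff_Suc_all[OF assms, of n]
    unfolding prod_beta_of_split all_alphas_eq f_def[symmetric] X_def[symmetric]
    by (simp add: prod_unfold_prod_mset mult.assoc)
  ultimately show ?thesis
    unfolding f_def by simp
qed

definition Hseries :: "real^'n \<Rightarrow> real \<Rightarrow> complex" where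
  "Hseries bj = xpow_series (series_exponent bj) (Fcoeff m a a0 l bi bj)"

lemma Fseries_nth:
  assumes "bj \<in> C"
  shows "fps_nth (Fseries m a a0 l bi bj) N = Hseries bj (real N / real (l 0))"
proof -
  have on_grid: "real N / real (l 0) = series_exponent bj + real k \<longleftrightarrow> N = S0 bj + k * l 0" for k
  proof -
    have "real N / real (l 0) = series_exponent bj + real k \<longleftrightarrow> real N = real (S0 bj + k * l 0)"
      using l0_pos by (simp add: series_exponent_def field_simps)
    then show ?thesis by (simp only: of_nat_eq_iff)
  qed
  show ?thesis
  proof (cases "S0 bj \<le> N \<and> l 0 dvd N - S0 bj")
    case True
    then have "N = S0 bj + (N - S0 bj) div l 0 * l 0" by simp
    then show ?thesis
      using True on_grid[of "(N - S0 bj) div l 0"] l0_pos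
      by (simp add: Hseries_def Fseries_def fps_X_power_mult_nth fps_compose_X_power_nth)
  next
    case False
    then have "Hseries bj (real N / real (l 0)) = 0"
      using xpow_series_nonzeroD on_grid unfolding Hseries_def by fastforce
    with False show ?thesis
      using l0_pos by (auto simp: Fseries_def fps_X_power_mult_nth fps_compose_X_power_nth)
  qed
qed

lemma Hseries_nonzeroD: "Hseries bj q \<noteq> 0 \<Longrightarrow> \<exists>n::nat. q = real (S0 bj) / real (l 0) + real n"
  using xpow_series_nonzeroD unfolding Hseries_def series_exponent_def by blast

lemma Ik_exponents:
  "inj_on series_exponent Ik" "\<forall>bj\<in>Ik. 0 \<le> series_exponent bj \<and> series_exponent bj < 1"
  using inj_on_series_exponent series_exponent_range by (auto intro: inj_on_subset)

lemma hyp_op_Hseries: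
  assumes "bj \<in> Ik"
  shows "hyp_op betas alphas (Hseries bj) q = 0"
  unfolding Hseries_def using assms finite_Ik Fcoeff_Suc
  by (intro hyp_op_xpow_series_eq_0) (auto simp: betas_eq)

lemma Hseries_independent:
  assumes "\<And>q. (\<Sum>bj\<in>Ik. d bj * Hseries bj q) = 0" "bj \<in> Ik"
  shows "d bj = 0"
  by (rule xpow_series_family_independent[OF finite_Ik Ik_exponents _ assms[unfolded Hseries_def]])
    (simp add: Fcoeff_0)

lemma hyp_op_solution_eq_sum_Hseries:
  assumes "gen_series h" "\<And>q. hyp_op betas alphas h q = 0"
  shows "h q = (\<Sum>bj\<in>Ik. h (series_exponent bj) * Hseries bj q)"
  unfolding Hseries_def
  by (rule hyp_op_solution_expansion[OF finite_Ik Ik_exponents betas_eq _ Fcoeff_Suc assms])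
    (simp_all add: Fcoeff_0)

end

theorem theorem6p17:
  fixes a :: "nat \<Rightarrow> real^'n" and a0 :: "real^'n" and l :: "nat \<Rightarrow> nat" and m :: nat
    and C :: "(real^'n) set" and bi :: "real^'n"
  assumes "\<forall>j\<in>{1..m}. a j \<in> intvecs" and "a0 \<in> intvecs"
    and "inj_on a {1..m}" and "independent (a ` {1..m})"
    and "\<forall>j\<le>m. l j > 0" and "Gcd (l ` {0..m}) = 1"
    and "of_nat (l 0) *\<^sub>R a0 = (\<Sum>j=1..m. of_nat (l j) *\<^sub>R a j)"
    and "l 0 = (\<Sum>j=1..m. l j)"
    and "is_coset m a a0 C"
    and "bi \<in> Bset m a \<inter> C" and "interior_pt m a bi"
  shows "\<exists>H :: real^'n \<Rightarrow> real \<Rightarrow> complex.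
     (\<forall>bj\<in>{b\<in>Bset m a \<inter> C. interior_pt m a b}.
        (\<forall>q. H bj q \<noteq> 0 \<longrightarrow>
           (\<exists>n::nat. q = of_nat (s0 m a a0 (l 0) bi bj) / of_nat (l 0) + of_nat n))
      \<and> (\<forall>q. hyp_op (Beta m a a0 (l 0) (Bset m a \<inter> C) bi) (Alpha m a a0 l (Bset m a \<inter> C) bi) (H bj) q = 0)
      \<and> (\<forall>N. fps_nth (Fseries m a a0 l bi bj) N = H bj (of_nat N / of_nat (l 0))))
   \<and> (\<forall>d. (\<forall>q. (\<Sum>bj\<in>{b\<in>Bset m a \<inter> C. interior_pt m a b}. d bj * H bj q) = 0) \<longrightarrow>
          (\<forall>bj\<in>{b\<in>Bset m a \<inter> C. interior_pt m a b}. d bj = 0))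
   \<and> (\<forall>h. gen_series h \<and>
          (\<forall>q. hyp_op (Beta m a a0 (l 0) (Bset m a \<inter> C) bi) (Alpha m a a0 l (Bset m a \<inter> C) bi) h q = 0) \<longrightarrow>
          (\<exists>d. \<forall>q. h q = (\<Sum>bj\<in>{b\<in>Bset m a \<inter> C. interior_pt m a b}. d bj * H bj q)))"
proof -
  interpret circuit_coset a m a0 l C bi
    using assms by unfold_locales auto
  show ?thesis
  proof (intro exI[of _ Hseries] conjI ballI allI impI)
    fix bj q
    assume "bj \<in> Ik"
    then show "hyp_op betas alphas (Hseries bj) q = 0"
      by (rule hyp_op_Hseries)
    show "Hseries bj q \<noteq> 0 \<Longrightarrow> \<exists>n::nat. q = of_nat (S0 bj) / of_nat (l 0) + of_nat n"
      by (rule Hseries_nonzeroD)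
    show "fps_nth (Fseries m a a0 l bi bj) N = Hseries bj (of_nat N / of_nat (l 0))" for N
      using \<open>bj \<in> Ik\<close> by (intro Fseries_nth) simp
  next
    fix d bj
    assume "\<forall>q. (\<Sum>bj\<in>Ik. d bj * Hseries bj q) = 0" and "bj \<in> Ik"
    then show "d bj = 0"
      by (blast intro: Hseries_independent)
  next
    fix h
    assume "gen_series h \<and> (\<forall>q. hyp_op betas alphas h q = 0)"
    then have "\<forall>q. h q = (\<Sum>bj\<in>Ik. h (series_exponent bj) * Hseries bj q)"
      by (blast intro: hyp_op_solution_eq_sum_Hseries)
    then show "\<exists>d. \<forall>q. h q = (\<Sum>bj\<in>Ik. d bj * Hseries bj q)"
      by (rule exI[of _ "\<lambda>bj. h (series_exponent bj)"])
  qed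
qed

end
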